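(* There is a constant $c_0>0$ such that for every $N$ for which some pair $(N,M)$ is non-feasible for the family of line graphs of star-forests, the smallest such $M$ satisfies \[M \geq \binom{N-\lceil (-15+\sqrt{153+72N})/2\rceil}{2} > \frac{N^2}{2} - c_0N\sqrt{N}.\]
   Context: All graphs are finite and simple; $L(F)$ is the line graph of $F$. A star-forest is a forest each of whose components is a star $K_{1,n_j}$ ($n_j\ge1$). For integers $N\ge1$ and $0\le M\le\binom N2$, $(N,M)$ is feasible for the family of line graphs of star-forests if there is a star-forest $F$ with $N$ edges such that $L(F)$ has exactly $M$ edges; otherwise it is non-feasible. *)

theory Defs
  imports Complex_Main
begin

text \<open>A finite simple graph is represented by its edge set, a finite set of
2-element vertex sets (vertices are natural numbers; isolated vertices are
irrelevant for counting edges).\<close>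

definition star_edges :: "nat \<Rightarrow> nat set \<Rightarrow> nat set set" where
  "star_edges c L = {{c, l} | l. l \<in> L}"

definition star_forest :: "nat set set \<Rightarrow> bool" where
  "star_forest E \<longleftrightarrow>
     (\<exists>S :: (nat \<times> nat set) set.
        finite S \<and>
        (\<forall>(c, L)\<in>S. finite L \<and> L \<noteq> {} \<and> c \<notin> L) \<and>
        (\<forall>(c, L)\<in>S. \<forall>(c', L')\<in>S. (c, L) \<noteq> (c', L') \<longrightarrow>
              insert c L \<inter> insert c' L' = {}) \<and>
        E = (\<Union>(c, L)\<in>S. star_edges c L))"

definition line_graph_edges :: "'a set set \<Rightarrow> 'a set set set" where
  "line_graph_edges E = {{e, f} | e f. e \<in> E \<and> f \<in> E \<and> e \<noteq> f \<and> e \<inter> f \<noteq> {}}"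

definition feasible_SF :: "nat \<Rightarrow> nat \<Rightarrow> bool" where
  "feasible_SF N M \<longleftrightarrow>
     (\<exists>E. star_forest E \<and> card E = N \<and> card (line_graph_edges E) = M)"

definition nonfeasible_SF :: "nat \<Rightarrow> nat \<Rightarrow> bool" where
  "nonfeasible_SF N M \<longleftrightarrow> M \<le> N choose 2 \<and> \<not> feasible_SF N M"

end

theory Submission
  imports Defs
begin

(* The line graph of K_{1,n} is K_n and the line graph of a vertex-disjoint union is the
   disjoint union of the line graphs, so (N, M) is feasible as soon as M = sum (n_i choose 2)
   for positive n_i with sum N. Below (N - k) choose 2 such a representation is found greedily:
   M = (a choose 2) + r with r < a, then r = (b choose 2) + t with t < b; use stars of sizes
   a and b, t copies of K_{1,2} and single edges for the rest. Since (b choose 2) <= r < a < N - k,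
   the choice of k forces 3 b <= k + 3, so a + b + 2 t <= N. Finally k = O(sqrt N) gives the
   asymptotic bound. *)

lemma star_edges_eq_image: "star_edges c L = (\<lambda>l. {c, l}) ` L"
  unfolding star_edges_def by blast

lemma card_star_edges: "card (star_edges c L) = card L"
  unfolding star_edges_eq_image
  by (rule card_image) (auto simp: inj_on_def doubleton_eq_iff)

lemma line_graph_edges_star_edges:
  assumes "c \<notin> L"
  shows "line_graph_edges (star_edges c L) = image (\<lambda>l. {c, l}) ` {P. P \<subseteq> L \<and> card P = 2}"
proof (intro equalityI subsetI)
  fix x assume "x \<in> line_graph_edges (star_edges c L)"
  then obtain l l' where "x = {{c, l}, {c, l'}}" "l \<in> L" "l' \<in> L" "l \<noteq> l'"
    unfolding line_graph_edges_def star_edges_def by auto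
  then have "x = (\<lambda>l. {c, l}) ` {l, l'}" and "{l, l'} \<subseteq> L \<and> card {l, l'} = 2"
    by simp_all
  then show "x \<in> image (\<lambda>l. {c, l}) ` {P. P \<subseteq> L \<and> card P = 2}"
    by blast
next
  fix x assume "x \<in> image (\<lambda>l. {c, l}) ` {P. P \<subseteq> L \<and> card P = 2}"
  then obtain P where "P \<subseteq> L" "card P = 2" "x = (\<lambda>l. {c, l}) ` P"
    by blast
  then obtain l l' where "x = {{c, l}, {c, l'}}" "l \<in> L" "l' \<in> L" "l \<noteq> l'"
    by (auto simp: card_2_iff)
  moreover from this assms have "{c, l} \<noteq> {c, l'}"
    by (auto simp: doubleton_eq_iff)
  ultimately show "x \<in> line_graph_edges (star_edges c L)"
    unfolding line_graph_edges_def star_edges_def by blast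
qed

lemma card_line_graph_edges_star_edges:
  assumes "finite L" "c \<notin> L"
  shows "card (line_graph_edges (star_edges c L)) = card L choose 2"
proof -
  have "inj_on (image (\<lambda>l. {c, l})) {P. P \<subseteq> L \<and> card P = 2}"
    by (rule inj_on_subset[OF inj_on_image_Pow[of _ L]]) (auto simp: inj_on_def doubleton_eq_iff)
  then show ?thesis
    using assms by (simp add: line_graph_edges_star_edges card_image n_subsets)
qed

lemma line_graph_edges_subset_Pow: "line_graph_edges E \<subseteq> Pow E"
  unfolding line_graph_edges_def by auto

lemma finite_line_graph_edges: "finite E \<Longrightarrow> finite (line_graph_edges E)"
  using line_graph_edges_subset_Pow finite_subset by blast

lemma line_graph_edges_Un:
  assumes "\<Union>E \<inter> \<Union>F = {}"
  shows "line_graph_edges (E \<union> F) = line_graph_edges E \<union> line_graph_edges F"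
proof (intro equalityI subsetI)
  fix x assume "x \<in> line_graph_edges (E \<union> F)"
  then obtain e f where "x = {e, f}" "e \<in> E \<union> F" "f \<in> E \<union> F" "e \<noteq> f" "e \<inter> f \<noteq> {}"
    unfolding line_graph_edges_def by blast
  moreover from this assms have "e \<in> E \<and> f \<in> E \<or> e \<in> F \<and> f \<in> F"
    by blast
  ultimately show "x \<in> line_graph_edges E \<union> line_graph_edges F"
    unfolding line_graph_edges_def by blast
qed (auto simp: line_graph_edges_def)

lemma line_graph_edges_disjoint:
  assumes "\<Union>E \<inter> \<Union>F = {}"
  shows "line_graph_edges E \<inter> line_graph_edges F = {}"
  using assms unfolding line_graph_edges_def by (auto simp: doubleton_eq_iff)

lemma card_line_graph_edges_Un:
  assumes "finite E" "finite F" "\<Union>E \<inter> \<Union>F = {}"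
  shows "card (line_graph_edges (E \<union> F)) = card (line_graph_edges E) + card (line_graph_edges F)"
  using assms
  by (simp add: line_graph_edges_Un line_graph_edges_disjoint finite_line_graph_edges card_Un_disjoint)

lemma star_forest_empty: "star_forest {}"
  unfolding star_forest_def by (intro exI[of _ "{}"]) auto

lemma star_forest_finite_vertices:
  assumes "star_forest E"
  shows "finite (\<Union>E)"
proof -
  obtain S :: "(nat \<times> nat set) set" where S: "finite S" "\<forall>(c, L)\<in>S. finite L \<and> L \<noteq> {} \<and> c \<notin> L"
    and E: "E = (\<Union>(c, L)\<in>S. star_edges c L)"
    using assms unfolding star_forest_def by blast
  have "\<Union>E \<subseteq> (\<Union>(c, L)\<in>S. insert c L)"
    unfolding E star_edges_def by blast
  moreover have "finite (\<Union>(c, L)\<in>S. insert c L)"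
    using S by auto
  ultimately show ?thesis
    by (rule finite_subset)
qed

lemma star_forest_Un_star_edges:
  assumes "star_forest E" "finite L" "L \<noteq> {}" "c \<notin> L" "insert c L \<inter> \<Union>E = {}"
  shows "star_forest (E \<union> star_edges c L)"
proof -
  obtain S :: "(nat \<times> nat set) set" where S: "finite S"
    "\<forall>(c, L)\<in>S. finite L \<and> L \<noteq> {} \<and> c \<notin> L"
    "\<forall>(c, L)\<in>S. \<forall>(c', L')\<in>S. (c, L) \<noteq> (c', L') \<longrightarrow> insert c L \<inter> insert c' L' = {}"
    and E: "E = (\<Union>(c, L)\<in>S. star_edges c L)"
    using assms(1) unfolding star_forest_def by blast
  have covered: "insert c' L' \<subseteq> \<Union>E" if "(c', L') \<in> S" for c' L'
  proof -
    from that S(2) obtain l where "l \<in> L'" by blast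
    with that have "{c', l} \<in> E"
      unfolding E star_edges_def by blast
    moreover have "{c', l'} \<in> E" if "l' \<in> L'" for l'
      using that \<open>(c', L') \<in> S\<close> unfolding E star_edges_def by blast
    ultimately show ?thesis
      by blast
  qed
  have new_disjoint: "insert c L \<inter> insert c' L' = {}" if "(c', L') \<in> S" for c' L'
    using assms(5) covered[OF that] by blast
  have "\<forall>(c1, L1)\<in>insert (c, L) S. \<forall>(c2, L2)\<in>insert (c, L) S.
      (c1, L1) \<noteq> (c2, L2) \<longrightarrow> insert c1 L1 \<inter> insert c2 L2 = {}"
    using S(3) new_disjoint by (fastforce simp: Int_commute)
  moreover have "E \<union> star_edges c L = (\<Union>(c, L)\<in>insert (c, L) S. star_edges c L)"
    unfolding E by (simp add: Un_commute)
  ultimately show ?thesis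
    unfolding star_forest_def using S(1,2) assms(2-4)
    by (intro exI[of _ "insert (c, L) S"]) simp
qed

lemma feasible_SF_0_0: "feasible_SF 0 0"
  unfolding feasible_SF_def line_graph_edges_def
  using star_forest_empty by (intro exI[of _ "{}"]) simp

lemma feasible_SF_add_star:
  assumes "feasible_SF N M" "n \<ge> 1"
  shows "feasible_SF (N + n) (M + (n choose 2))"
proof -
  obtain E where E: "star_forest E" "card E = N" "card (line_graph_edges E) = M"
    using assms(1) unfolding feasible_SF_def by blast
  have "finite (\<Union>E)"
    using E(1) by (rule star_forest_finite_vertices)
  then obtain m where m: "\<forall>v\<in>\<Union>E. v < m"
    using finite_nat_set_iff_bounded by blast
  define L where "L = {m<..m + n}"
  define F where "F = star_edges m L"
  have L: "finite L" "L \<noteq> {}" "m \<notin> L" "card L = n"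
    using assms(2) unfolding L_def by auto
  have fresh: "insert m L \<inter> \<Union>E = {}"
    using m unfolding L_def by fastforce
  have "\<Union>F \<subseteq> insert m L"
    unfolding F_def star_edges_def by blast
  with fresh have vertex_disjoint: "\<Union>E \<inter> \<Union>F = {}"
    by blast
  have "E \<inter> F = {}"
  proof (rule equals0I)
    fix e assume "e \<in> E \<inter> F"
    with vertex_disjoint have "e = {}"
      by blast
    with \<open>e \<in> E \<inter> F\<close> show False
      unfolding F_def star_edges_def by blast
  qed
  have "finite E"
    using \<open>finite (\<Union>E)\<close> by (rule finite_UnionD)
  have "finite F"
    unfolding F_def star_edges_eq_image using L(1) by simp
  have "star_forest (E \<union> F)"
    unfolding F_def using E(1) L(1-3) fresh by (rule star_forest_Un_star_edges)
  moreover have "card (E \<union> F) = N + n"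
    using \<open>finite E\<close> \<open>finite F\<close> \<open>E \<inter> F = {}\<close> E(2) L
    by (simp add: card_Un_disjoint F_def card_star_edges)
  moreover have "card (line_graph_edges (E \<union> F)) = M + (n choose 2)"
    using \<open>finite E\<close> \<open>finite F\<close> vertex_disjoint E(3) L
    by (simp add: card_line_graph_edges_Un F_def card_line_graph_edges_star_edges)
  ultimately show ?thesis
    unfolding feasible_SF_def by blast
qed

lemma feasible_SF_star_sizes:
  assumes "\<forall>n\<in>set ns. n \<ge> 1"
  shows "feasible_SF (sum_list ns) (\<Sum>n\<leftarrow>ns. n choose 2)"
  using assms
proof (induction ns)
  case Nil
  then show ?case
    using feasible_SF_0_0 by simp
next
  case (Cons n ns)
  then have "feasible_SF (sum_list ns + n) ((\<Sum>n\<leftarrow>ns. n choose 2) + (n choose 2))"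
    by (intro feasible_SF_add_star) auto
  then show ?case
    by (simp add: add.commute)
qed

lemma choose_two_Suc: "Suc n choose 2 = (n choose 2) + n"
  by (simp add: numeral_2_eq_2)

lemma two_mult_choose_two: "2 * (n choose 2) = n * (n - 1)"
  by (induction n) (auto simp: choose_two_Suc algebra_simps)

lemma of_nat_choose_two: "real (n choose 2) = real n * (real n - 1) / 2"
proof -
  have "real (2 * (n choose 2)) = real (n * (n - 1))"
    by (simp only: two_mult_choose_two)
  then have "2 * real (n choose 2) = real n * real (n - 1)"
    by simp
  then show ?thesis
    by (cases n) simp_all
qed

lemma triangular_decomposition: "\<exists>a r. M = (a choose 2) + r \<and> r < a"
proof (induction M)
  case 0
  show ?case
    by (intro exI[of _ 1] exI[of _ 0]) simp
next
  case (Suc M)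
  then obtain a r where ar: "M = (a choose 2) + r" "r < a"
    by blast
  show ?case
  proof (cases "Suc r < a")
    case True
    with ar show ?thesis
      by (intro exI[of _ a] exI[of _ "Suc r"]) simp
  next
    case False
    with ar have "Suc M = (Suc a choose 2) + 0"
      by (simp add: choose_two_Suc)
    then show ?thesis
      by blast
  qed
qed

lemma choose_two_diff_lower_bound:
  "real ((N - k) choose 2) \<ge> (real N ^ 2 - real (2 * k + 1) * real N) / 2"
proof (cases "k \<le> N")
  case True
  then have "real ((N - k) choose 2) = (real N ^ 2 - real (2 * k + 1) * real N + real k * (real k + 1)) / 2"
    by (simp add: of_nat_choose_two of_nat_diff power2_eq_square algebra_simps)
  moreover have "real k * (real k + 1) \<ge> 0"
    by simp
  ultimately show ?thesis
    by (simp add: field_simps)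
next
  case False
  then have "real N ^ 2 \<le> real (2 * k + 1) * real N"
    unfolding power2_eq_square by (intro mult_right_mono) auto
  then show ?thesis
    by simp
qed

lemma choose_two_sum_representation:
  fixes N k M :: nat
  assumes k: "18 * N \<le> k * k + 15 * k + 18" and M: "M < (N - k) choose 2"
  shows "\<exists>ns. (\<forall>n\<in>set ns. n \<ge> 1) \<and> sum_list ns = N \<and> (\<Sum>n\<leftarrow>ns. n choose 2) = M"
proof -
  obtain a r where a: "M = (a choose 2) + r" "r < a"
    using triangular_decomposition by blast
  obtain b t where b: "r = (b choose 2) + t" "t < b"
    using triangular_decomposition by blast
  have "(a choose 2) < (N - k) choose 2"
    using a M by simp
  then have "a < N - k"
    by (meson binomial_right_mono not_le)
  then have "b choose 2 \<le> N - k - 2"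
    using a b by simp
  have "3 * b \<le> k + 3"
  proof (rule ccontr)
    assume "\<not> 3 * b \<le> k + 3"
    then have "(k + 4) * (k + 1) \<le> (3 * b) * (3 * b - 3)"
      by (intro mult_le_mono) simp_all
    also have "\<dots> = 9 * (2 * (b choose 2))"
      by (simp add: two_mult_choose_two algebra_simps diff_mult_distrib2)
    also have "\<dots> \<le> 18 * (N - k - 2)"
      using \<open>b choose 2 \<le> N - k - 2\<close> by simp
    finally show False
      using k \<open>a < N - k\<close> by (simp add: algebra_simps diff_mult_distrib2)
  qed
  define ns where "ns = [a, b] @ replicate t 2 @ replicate (N - (a + b + 2 * t)) 1"
  have "a + b + 2 * t \<le> N"
    using \<open>3 * b \<le> k + 3\<close> \<open>a < N - k\<close> b(2) by linarith
  then have "sum_list ns = N"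
    unfolding ns_def by (simp add: sum_list_replicate)
  moreover have "(\<Sum>n\<leftarrow>ns. n choose 2) = M"
    unfolding ns_def using a b by (simp add: sum_list_replicate binomial_eq_0)
  moreover have "\<forall>n\<in>set ns. n \<ge> 1"
    unfolding ns_def using a(2) b(2) by auto
  ultimately show ?thesis
    by blast
qed

(* (-15 + sqrt (153 + 72 N)) / 2 is the positive root of k^2 + 15 k + 18 = 18 N. *)
lemma ceiling_root_bounds:
  fixes N k :: nat
  assumes N: "N \<ge> 1" and k: "k = nat \<lceil>(-15 + sqrt (153 + 72 * real N)) / 2\<rceil>"
  shows "18 * N \<le> k * k + 15 * k + 18" and "real (2 * k + 1) < 16 * sqrt (real N)"
proof -
  define s where "s = sqrt (153 + 72 * real N)"
  have "s \<ge> sqrt 225"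
    unfolding s_def using N by (intro real_sqrt_le_mono) simp
  then have "s \<ge> 15"
    by simp
  then have "real k = of_int \<lceil>(s - 15) / 2\<rceil>"
    unfolding k s_def by simp
  then have k_ceiling: "real k - 1 < (s - 15) / 2" "(s - 15) / 2 \<le> real k"
    using ceiling_correct[of "(s - 15) / 2"] by simp_all
  have k_lower: "s \<le> 2 * real k + 15"
    using k_ceiling(2) by (simp add: field_simps)
  have k_upper: "2 * real k + 1 < s - 12"
    using k_ceiling(1) by (simp add: field_simps)
  have "153 + 72 * real N = s\<^sup>2"
    unfolding s_def by simp
  also have "\<dots> \<le> (2 * real k + 15)\<^sup>2"
    using k_lower \<open>s \<ge> 15\<close> by (intro power_mono) simp_all
  finally have "real (18 * N) \<le> real (k * k + 15 * k + 18)"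
    by (simp add: power2_eq_square algebra_simps)
  then show "18 * N \<le> k * k + 15 * k + 18"
    by (simp only: of_nat_le_iff)
  have "s \<le> sqrt (225 * real N)"
    unfolding s_def using N by (intro real_sqrt_le_mono) simp
  also have "\<dots> = 15 * sqrt (real N)"
    by (simp add: real_sqrt_mult)
  finally show "real (2 * k + 1) < 16 * sqrt (real N)"
    using k_upper by simp
qed

lemma feasible_SF_below_choose_two:
  assumes "18 * N \<le> k * k + 15 * k + 18" "M < (N - k) choose 2"
  shows "feasible_SF N M"
proof -
  obtain ns where "\<forall>n\<in>set ns. n \<ge> 1" "sum_list ns = N" "(\<Sum>n\<leftarrow>ns. n choose 2) = M"
    using choose_two_sum_representation[OF assms] by blast
  then show ?thesis
    using feasible_SF_star_sizes by metis
qed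

theorem mainTheorem8:
  "\<exists>c0::real. c0 > 0 \<and>
     (\<forall>N::nat. N \<ge> 1 \<longrightarrow> (\<exists>M. nonfeasible_SF N M) \<longrightarrow>
        (let m = (LEAST M. nonfeasible_SF N M);
             b = (N - nat \<lceil>(-15 + sqrt (153 + 72 * real N)) / 2\<rceil>) choose 2
         in m \<ge> b \<and> real b > real N ^ 2 / 2 - c0 * real N * sqrt (real N)))"
proof (intro exI[of _ 8] conjI allI impI)
  show "(8::real) > 0"
    by simp
  fix N :: nat
  assume N: "N \<ge> 1" and "\<exists>M. nonfeasible_SF N M"
  define k where "k = nat \<lceil>(-15 + sqrt (153 + 72 * real N)) / 2\<rceil>"
  define b where "b = (N - k) choose 2"
  note k_bounds = ceiling_root_bounds[OF N k_def]
  have "nonfeasible_SF N (LEAST M. nonfeasible_SF N M)"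
    using \<open>\<exists>M. nonfeasible_SF N M\<close> by (rule LeastI_ex)
  then have least: "b \<le> (LEAST M. nonfeasible_SF N M)"
    using feasible_SF_below_choose_two[OF k_bounds(1)]
    unfolding b_def nonfeasible_SF_def by (meson not_le)
  have "real (2 * k + 1) * real N < 16 * sqrt (real N) * real N"
    using k_bounds(2) N by (intro mult_strict_right_mono) auto
  then have bound: "real N ^ 2 / 2 - 8 * real N * sqrt (real N) < real b"
    using choose_two_diff_lower_bound[of N k] unfolding b_def by (simp add: field_simps)
  show "let m = (LEAST M. nonfeasible_SF N M);
             b = (N - nat \<lceil>(-15 + sqrt (153 + 72 * real N)) / 2\<rceil>) choose 2
         in m \<ge> b \<and> real b > real N ^ 2 / 2 - 8 * real N * sqrt (real N)"
    using least bound
    unfolding Let_def b_def k_def by simp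
qed

end
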